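(* Let $r,s,t>1$ and $M>0$ be real numbers, set $c = 4rst - 2r^2 - 2s^2 - 2t^2 + 1$ and assume $c>1$. Put $\tilde M = M\,\frac{s\sqrt{c^2-1} + (c-1)\sqrt{s^2-1}}{c-1}$. Define the following elements of $\mathrm{SL}(2,\mathbb{R})$: $$\rho = r\mathbf{1} + \frac{r(c+1)}{\sqrt{c^2-1}}\mathbf{I} - \frac{\tilde M(2rs - t + (c+\sqrt{c^2-1})t)}{2(c-1+2s^2)}(\mathbf{J}+\mathbf{K}) + \frac{2rs-t+(c-\sqrt{c^2-1})t}{2\tilde M(c-1)}(\mathbf{J}-\mathbf{K}),$$ $$\sigma = s\mathbf{1} - \frac{s(c+1)}{\sqrt{c^2-1}}\mathbf{I} + \frac{\tilde M}{2}(\mathbf{J}+\mathbf{K}) - \frac{c-1+2s^2}{2\tilde M(c-1)}(\mathbf{J}-\mathbf{K}),$$ and let $\rho'$, $\sigma'$ be obtained from $\rho$, $\sigma$ respectively by changing the signs of the coefficients of $(\mathbf{J}+\mathbf{K})$ and $(\mathbf{J}-\mathbf{K})$ (leaving the coefficients of $\mathbf{1}$ and $\mathbf{I}$ unchanged). Let $\mathcal{S}$ be the genus 2 hyperbolic surface obtained by doubling the once-punctured torus determined by $\rho,\sigma$, whose fundamental group is represented by the group generated by (the images in $\mathrm{PSL}(2,\mathbb{R})$ of) $\rho,\sigma,\rho',\sigma'$. Then the trace field of $\mathcal{S}$, i.e. $\mathbb{Q}(\{\mathrm{tr}\,\gamma\})$ where $\gamma$ ranges over the preimage in $\mathrm{SL}(2,\mathbb{R})$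 of this group, is equal to $\mathbb{Q}(r,s,t)$.
   Context: $\mathbf{1} = \begin{pmatrix}1&0\\0&1\end{pmatrix}$, $\mathbf{I} = \begin{pmatrix}1&0\\0&-1\end{pmatrix}$, $\mathbf{J} = \begin{pmatrix}0&1\\1&0\end{pmatrix}$, $\mathbf{K} = \begin{pmatrix}0&1\\-1&0\end{pmatrix}$. With these parameters $\rho,\sigma$ generate a Fuchsian group uniformizing a hyperbolic once-punctured torus $\mathcal{T}$ with $\mathrm{tr}\,\rho=2r$, $\mathrm{tr}\,\sigma=2s$, $\mathrm{tr}\,\rho\sigma=2t$, $\mathrm{tr}\,[\rho,\sigma] = -2c$; $\rho',\sigma'$ correspond to the mirror image of $\mathcal{T}$ (the Möbius map $\frac{az+b}{cz+d}$ is replaced by $\frac{az-b}{-cz+d}$), and $\mathcal{S}$ is obtained by gluing $\mathcal{T}$ and its mirror image along their common boundary. *)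

theory Defs
  imports "HOL-Analysis.Analysis"
begin

definition mat2 :: "real \<Rightarrow> real \<Rightarrow> real \<Rightarrow> real \<Rightarrow> real^2^2" where
  "mat2 a b c d = vector [vector [a, b], vector [c, d]]"

definition mI :: "real^2^2" where "mI = mat2 1 0 0 (-1)"
definition mJ :: "real^2^2" where "mJ = mat2 0 1 1 0"
definition mK :: "real^2^2" where "mK = mat2 0 1 (-1) 0"

inductive_set gen_group :: "(real^2^2) set \<Rightarrow> (real^2^2) set" for S where
  one: "mat 1 \<in> gen_group S"
| mul: "g \<in> S \<Longrightarrow> h \<in> gen_group S \<Longrightarrow> g ** h \<in> gen_group S"
| mul_inv: "g \<in> S \<Longrightarrow> h \<in> gen_group S \<Longrightarrow> matrix_inv g ** h \<in> gen_group S"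

definition is_subfield :: "real set \<Rightarrow> bool" where
  "is_subfield F \<longleftrightarrow> 0 \<in> F \<and> 1 \<in> F \<and>
     (\<forall>x\<in>F. \<forall>y\<in>F. x + y \<in> F \<and> x * y \<in> F) \<and>
     (\<forall>x\<in>F. - x \<in> F \<and> (x \<noteq> 0 \<longrightarrow> inverse x \<in> F))"

definition field_gen :: "real set \<Rightarrow> real set" where
  "field_gen A = \<Inter>{F. is_subfield F \<and> A \<subseteq> F}"

end

theory Submission
  imports Defs
begin

text \<open>For \<open>P, R \<in> SL(2,\<real>)\<close> and a subfield \<open>F\<close> containing \<open>tr P\<close>, \<open>tr R\<close>, \<open>tr PR\<close>, the
  \<open>F\<close>-span of \<open>1, P, R, PR\<close> is closed under products (Cayley--Hamilton) and under inverses of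
  its invertible elements, and all its traces lie in \<open>F\<close>. So the trace field of any group whose
  generators lie in this span and include \<open>P, R\<close> is \<open>\<rat>(tr P, tr R, tr PR)\<close>; here this is
  \<open>\<rat>(r, s, t)\<close>. The mirrored generators are \<open>\<rho>' = I \<rho> I\<^sup>-\<^sup>1\<close>, \<open>\<sigma>' = I \<sigma> I\<^sup>-\<^sup>1\<close>, and although
  \<open>I\<close> itself is not in the span, \<open>\<surd>(c\<^sup>2 - 1) I\<close> is an explicit \<open>\<rat>(r,s,t)\<close>-combination \<open>Y\<close> of
  \<open>1, \<rho>, \<sigma>, \<rho>\<sigma>\<close>; hence \<open>\<rho>' = 4/(c\<^sup>2 - 1) \<cdot> Y \<rho> Y\<close> lies in the span, and likewise \<open>\<sigma>'\<close>.\<close>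

lemma mat2_nth [simp]:
  "mat2 a b c d $ 1 $ 1 = a" "mat2 a b c d $ 1 $ 2 = b"
  "mat2 a b c d $ 2 $ 1 = c" "mat2 a b c d $ 2 $ 2 = d"
  by (simp_all add: mat2_def)

lemma mat2_cases:
  obtains a b c d where "X = mat2 a b c d"
proof
  show "X = mat2 (X$1$1) (X$1$2) (X$2$1) (X$2$2)" by (simp add: vec_eq_iff forall_2)
qed

lemma mat2_eq_iff: "mat2 a b c d = mat2 a' b' c' d' \<longleftrightarrow> a = a' \<and> b = b' \<and> c = c' \<and> d = d'"
  by (metis mat2_nth)

lemma mat2_one: "(mat 1 :: real^2^2) = mat2 1 0 0 1"
  by (simp add: vec_eq_iff forall_2 mat_def)

lemma mat2_add [simp]: "mat2 a b c d + mat2 a' b' c' d' = mat2 (a+a') (b+b') (c+c') (d+d')"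
  by (simp add: vec_eq_iff forall_2)
lemma mat2_diff [simp]: "mat2 a b c d - mat2 a' b' c' d' = mat2 (a-a') (b-b') (c-c') (d-d')"
  by (simp add: vec_eq_iff forall_2)
lemma mat2_uminus [simp]: "- mat2 a b c d = mat2 (-a) (-b) (-c) (-d)"
  by (simp add: vec_eq_iff forall_2)
lemma mat2_scaleR [simp]: "k *\<^sub>R mat2 a b c d = mat2 (k*a) (k*b) (k*c) (k*d)"
  by (simp add: vec_eq_iff forall_2)
lemma mat2_mult [simp]: "mat2 a b c d ** mat2 a' b' c' d' =
   mat2 (a*a'+b*c') (a*b'+b*d') (c*a'+d*c') (c*b'+d*d')"
  by (simp add: vec_eq_iff forall_2 matrix_matrix_mult_def sum_2)
lemma trace_mat2 [simp]: "trace (mat2 a b c d) = a + d"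
  by (simp add: trace_def sum_2)
lemma det_mat2 [simp]: "det (mat2 a b c d) = a*d - b*c"
  by (simp add: det_2)

lemma matrix_add_rdistrib: "((A::'a::semiring_1^'n^'m) + B) ** C = A ** C + B ** C"
  by (vector matrix_matrix_mult_def sum.distrib[symmetric] field_simps)

lemma trace_scaleR: "trace (k *\<^sub>R (A :: real^'n^'n)) = k * trace A"
  by (simp add: trace_def sum_distrib_left)

lemma matrix_inv_unique:
  fixes X B :: "real^'n^'n"
  assumes "X ** B = mat 1" "B ** X = mat 1"
  shows "matrix_inv X = B"
proof -
  have "\<exists>A'. X ** A' = mat 1 \<and> A' ** X = mat 1" using assms by blast
  then have inv: "X ** matrix_inv X = mat 1 \<and> matrix_inv X ** X = mat 1"
    unfolding matrix_inv_def by (rule someI_ex)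
  have "matrix_inv X = matrix_inv X ** (X ** B)" using assms by simp
  also have "\<dots> = B" using inv by (simp add: matrix_mul_assoc)
  finally show ?thesis .
qed

lemma matrix_inv_2x2:
  fixes X :: "real^2^2"
  assumes "det X \<noteq> 0"
  shows "matrix_inv X = (1 / det X) *\<^sub>R (trace X *\<^sub>R mat 1 - X)"
proof -
  obtain a b c d where X: "X = mat2 a b c d" by (rule mat2_cases)
  have "a * d - b * c \<noteq> 0" using assms unfolding X by simp
  then show ?thesis unfolding X
    by (intro matrix_inv_unique)
      (simp_all add: mat2_one mat2_eq_iff diff_divide_distrib[symmetric] mult.commute)
qed

lemma det_2x2_trace: "2 * det (X :: real^2^2) = trace X ^ 2 - trace (X ** X)"
proof -
  obtain a b c d where X: "X = mat2 a b c d" by (rule mat2_cases)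
  show ?thesis unfolding X by (simp add: power2_eq_square algebra_simps)
qed

lemma det_mI: "det mI = -1"
  by (simp add: mI_def)

context
  fixes F :: "real set"
  assumes F: "is_subfield F"
begin

lemma subfield_zero: "0 \<in> F" and subfield_one: "1 \<in> F"
  using F by (auto simp: is_subfield_def)

lemma subfield_add: "x \<in> F \<Longrightarrow> y \<in> F \<Longrightarrow> x + y \<in> F"
  and subfield_mult: "x \<in> F \<Longrightarrow> y \<in> F \<Longrightarrow> x * y \<in> F"
  and subfield_uminus: "x \<in> F \<Longrightarrow> - x \<in> F"
  using F by (auto simp: is_subfield_def)

lemma subfield_inverse: "x \<in> F \<Longrightarrow> inverse x \<in> F"
  using F by (cases "x = 0") (auto simp: is_subfield_def)

lemma subfield_diff: "x \<in> F \<Longrightarrow> y \<in> F \<Longrightarrow> x - y \<in> F"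
  using subfield_add[of x "- y"] subfield_uminus[of y] by simp

lemma subfield_divide: "x \<in> F \<Longrightarrow> y \<in> F \<Longrightarrow> x / y \<in> F"
  using subfield_mult[of x "inverse y"] subfield_inverse[of y] by (simp add: divide_inverse)

lemma subfield_of_nat: "of_nat n \<in> F"
  by (induction n) (simp_all add: subfield_zero subfield_one subfield_add)

lemma subfield_numeral: "numeral n \<in> F"
  using subfield_of_nat[of "numeral n"] by simp

lemma subfield_power: "x \<in> F \<Longrightarrow> x ^ n \<in> F"
  by (induction n) (simp_all add: subfield_one subfield_mult)

lemmas subfield_closed = subfield_zero subfield_one subfield_add subfield_mult subfield_uminus
  subfield_inverse subfield_diff subfield_divide subfield_numeral subfield_power

end

lemma field_gen_subfield: "is_subfield (field_gen A)"
  unfolding field_gen_def is_subfield_def by blast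

lemma field_gen_superset: "A \<subseteq> field_gen A"
  unfolding field_gen_def by blast

lemma field_gen_least: "is_subfield F \<Longrightarrow> A \<subseteq> F \<Longrightarrow> field_gen A \<subseteq> F"
  unfolding field_gen_def by blast

lemma field_gen_double: "field_gen ((*) 2 ` A) = field_gen A"
proof (rule antisym)
  note closed = subfield_closed[OF field_gen_subfield]
  show "field_gen ((*) 2 ` A) \<subseteq> field_gen A"
    using field_gen_superset[of A] closed by (intro field_gen_least field_gen_subfield) auto
  have "x = 2 * x / 2" for x :: real by simp
  then show "field_gen A \<subseteq> field_gen ((*) 2 ` A)"
    using field_gen_superset[of "(*) 2 ` A"] closed
    by (intro field_gen_least field_gen_subfield) (metis image_subset_iff subsetI)
qed

text \<open>When the traces and determinants of \<open>P\<close>, \<open>R\<close> lie in \<open>F\<close>, this is the quaternion algebra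
  over \<open>F\<close> generated by \<open>P\<close> and \<open>R\<close>.\<close>

definition quaternion_span :: "real set \<Rightarrow> real^2^2 \<Rightarrow> real^2^2 \<Rightarrow> (real^2^2) set" where
  "quaternion_span F P R = {x0 *\<^sub>R mat 1 + x1 *\<^sub>R P + x2 *\<^sub>R R + x3 *\<^sub>R (P ** R) |
     x0 x1 x2 x3. x0 \<in> F \<and> x1 \<in> F \<and> x2 \<in> F \<and> x3 \<in> F}"

lemma quaternion_spanI:
  "x0 \<in> F \<Longrightarrow> x1 \<in> F \<Longrightarrow> x2 \<in> F \<Longrightarrow> x3 \<in> F \<Longrightarrow>
    x0 *\<^sub>R mat 1 + x1 *\<^sub>R P + x2 *\<^sub>R R + x3 *\<^sub>R (P ** R) \<in> quaternion_span F P R"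
  unfolding quaternion_span_def by blast

lemma quaternion_spanE:
  assumes "X \<in> quaternion_span F P R"
  obtains x0 x1 x2 x3 where "x0 \<in> F" "x1 \<in> F" "x2 \<in> F" "x3 \<in> F"
    "X = x0 *\<^sub>R mat 1 + x1 *\<^sub>R P + x2 *\<^sub>R R + x3 *\<^sub>R (P ** R)"
  using assms unfolding quaternion_span_def by blast

lemma mult_left_quaternion_P:
  fixes P R :: "real^2^2"
  shows "P ** (x0 *\<^sub>R mat 1 + x1 *\<^sub>R P + x2 *\<^sub>R R + x3 *\<^sub>R (P ** R)) =
    (- det P * x1) *\<^sub>R mat 1 + (x0 + trace P * x1) *\<^sub>R P + (- det P * x3) *\<^sub>R R
      + (x2 + trace P * x3) *\<^sub>R (P ** R)"
proof -
  obtain a b c d where P: "P = mat2 a b c d" by (rule mat2_cases)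
  obtain a' b' c' d' where R: "R = mat2 a' b' c' d'" by (rule mat2_cases)
  show ?thesis unfolding P R mat2_one by (simp add: mat2_eq_iff) algebra
qed

lemma mult_left_quaternion_R:
  fixes P R :: "real^2^2"
  shows "R ** (x0 *\<^sub>R mat 1 + x1 *\<^sub>R P + x2 *\<^sub>R R + x3 *\<^sub>R (P ** R)) =
    ((trace (P ** R) - trace P * trace R) * x1 - det R * x2 - det R * trace P * x3) *\<^sub>R mat 1
      + (trace R * x1 + det R * x3) *\<^sub>R P
      + (x0 + trace P * x1 + trace R * x2 + trace (P ** R) * x3) *\<^sub>R R + (- x1) *\<^sub>R (P ** R)"
proof -
  obtain a b c d where P: "P = mat2 a b c d" by (rule mat2_cases)
  obtain a' b' c' d' where R: "R = mat2 a' b' c' d'" by (rule mat2_cases)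
  show ?thesis unfolding P R mat2_one by (simp add: mat2_eq_iff) algebra
qed

context
  fixes F :: "real set" and P R :: "real^2^2"
  assumes F: "is_subfield F"
    and in_F: "trace P \<in> F" "det P \<in> F" "trace R \<in> F" "det R \<in> F" "trace (P ** R) \<in> F"
begin

lemma quaternion_span_basis:
  "mat 1 \<in> quaternion_span F P R" "P \<in> quaternion_span F P R"
  "R \<in> quaternion_span F P R" "P ** R \<in> quaternion_span F P R"
  using quaternion_spanI[of 1 F 0 0 0 P R] quaternion_spanI[of 0 F 1 0 0 P R]
    quaternion_spanI[of 0 F 0 1 0 P R] quaternion_spanI[of 0 F 0 0 1 P R]
  by (simp_all add: subfield_zero[OF F] subfield_one[OF F])

lemma quaternion_span_add:
  assumes "X \<in> quaternion_span F P R" "Y \<in> quaternion_span F P R"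
  shows "X + Y \<in> quaternion_span F P R"
proof -
  obtain x0 x1 x2 x3 where x: "x0 \<in> F" "x1 \<in> F" "x2 \<in> F" "x3 \<in> F"
    "X = x0 *\<^sub>R mat 1 + x1 *\<^sub>R P + x2 *\<^sub>R R + x3 *\<^sub>R (P ** R)"
    using assms(1) by (rule quaternion_spanE)
  obtain y0 y1 y2 y3 where y: "y0 \<in> F" "y1 \<in> F" "y2 \<in> F" "y3 \<in> F"
    "Y = y0 *\<^sub>R mat 1 + y1 *\<^sub>R P + y2 *\<^sub>R R + y3 *\<^sub>R (P ** R)"
    using assms(2) by (rule quaternion_spanE)
  have "X + Y = (x0 + y0) *\<^sub>R mat 1 + (x1 + y1) *\<^sub>R P + (x2 + y2) *\<^sub>R R + (x3 + y3) *\<^sub>R (P ** R)"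
    unfolding x(5) y(5) by (simp add: algebra_simps)
  then show ?thesis using x y by (simp add: quaternion_spanI subfield_add[OF F])
qed

lemma quaternion_span_scaleR:
  assumes "k \<in> F" "X \<in> quaternion_span F P R"
  shows "k *\<^sub>R X \<in> quaternion_span F P R"
proof -
  obtain x0 x1 x2 x3 where x: "x0 \<in> F" "x1 \<in> F" "x2 \<in> F" "x3 \<in> F"
    "X = x0 *\<^sub>R mat 1 + x1 *\<^sub>R P + x2 *\<^sub>R R + x3 *\<^sub>R (P ** R)"
    using assms(2) by (rule quaternion_spanE)
  have "k *\<^sub>R X = (k * x0) *\<^sub>R mat 1 + (k * x1) *\<^sub>R P + (k * x2) *\<^sub>R R + (k * x3) *\<^sub>R (P ** R)"
    unfolding x(5) by (simp add: algebra_simps)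
  then show ?thesis using x assms(1) by (simp add: quaternion_spanI subfield_mult[OF F])
qed

lemma quaternion_span_diff:
  assumes "X \<in> quaternion_span F P R" "Y \<in> quaternion_span F P R"
  shows "X - Y \<in> quaternion_span F P R"
  using quaternion_span_add[OF assms(1) quaternion_span_scaleR[OF _ assms(2), of "- 1"]]
  by (simp add: subfield_closed[OF F])

lemma quaternion_span_mult_left:
  assumes "X \<in> quaternion_span F P R"
  shows "P ** X \<in> quaternion_span F P R" "R ** X \<in> quaternion_span F P R"
proof -
  obtain x0 x1 x2 x3 where x: "x0 \<in> F" "x1 \<in> F" "x2 \<in> F" "x3 \<in> F"
    "X = x0 *\<^sub>R mat 1 + x1 *\<^sub>R P + x2 *\<^sub>R R + x3 *\<^sub>R (P ** R)"
    using assms by (rule quaternion_spanE)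
  show "P ** X \<in> quaternion_span F P R" "R ** X \<in> quaternion_span F P R"
    unfolding x(5) mult_left_quaternion_P mult_left_quaternion_R
    using x in_F by (intro quaternion_spanI; simp add: subfield_closed[OF F])+
qed

lemma quaternion_span_mult:
  assumes "Z \<in> quaternion_span F P R" "X \<in> quaternion_span F P R"
  shows "Z ** X \<in> quaternion_span F P R"
proof -
  obtain z0 z1 z2 z3 where z: "z0 \<in> F" "z1 \<in> F" "z2 \<in> F" "z3 \<in> F"
    "Z = z0 *\<^sub>R mat 1 + z1 *\<^sub>R P + z2 *\<^sub>R R + z3 *\<^sub>R (P ** R)"
    using assms(1) by (rule quaternion_spanE)
  have "Z ** X = z0 *\<^sub>R X + z1 *\<^sub>R (P ** X) + z2 *\<^sub>R (R ** X) + z3 *\<^sub>R (P ** (R ** X))"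
    unfolding z(5) by (simp add: matrix_add_rdistrib scalar_matrix_assoc[symmetric] matrix_mul_assoc)
  then show ?thesis using z assms(2)
    by (simp add: quaternion_span_add quaternion_span_scaleR quaternion_span_mult_left)
qed

lemma quaternion_span_trace:
  assumes "X \<in> quaternion_span F P R"
  shows "trace X \<in> F"
proof -
  obtain x0 x1 x2 x3 where x: "x0 \<in> F" "x1 \<in> F" "x2 \<in> F" "x3 \<in> F"
    "X = x0 *\<^sub>R mat 1 + x1 *\<^sub>R P + x2 *\<^sub>R R + x3 *\<^sub>R (P ** R)"
    using assms by (rule quaternion_spanE)
  have "trace (mat 1 :: real^2^2) = 2" by (simp add: mat2_one)
  then show ?thesis unfolding x(5) using x in_F
    by (simp add: trace_add trace_scaleR subfield_closed[OF F])
qed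

lemma quaternion_span_det:
  assumes "X \<in> quaternion_span F P R"
  shows "det X \<in> F"
proof -
  have "det X = (trace X ^ 2 - trace (X ** X)) / 2" using det_2x2_trace[of X] by simp
  moreover have "(trace X ^ 2 - trace (X ** X)) / 2 \<in> F"
    using assms by (simp add: quaternion_span_trace quaternion_span_mult subfield_closed[OF F])
  ultimately show ?thesis by (simp only:)
qed

lemma quaternion_span_matrix_inv:
  assumes "X \<in> quaternion_span F P R" "det X \<noteq> 0"
  shows "matrix_inv X \<in> quaternion_span F P R"
  unfolding matrix_inv_2x2[OF assms(2)] using assms
  by (simp add: quaternion_span_diff quaternion_span_scaleR quaternion_span_basis
      quaternion_span_trace quaternion_span_det subfield_closed[OF F])

lemma gen_group_subset_quaternion_span:
  assumes "S \<subseteq> quaternion_span F P R" "\<forall>g\<in>S. det g \<noteq> 0"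
  shows "gen_group S \<subseteq> quaternion_span F P R"
proof
  fix h assume "h \<in> gen_group S"
  then show "h \<in> quaternion_span F P R"
  proof (induction rule: gen_group.induct)
    case one
    show ?case by (rule quaternion_span_basis)
  next
    case (mul g h)
    then show ?case using assms quaternion_span_mult by blast
  next
    case (mul_inv g h)
    then show ?case using assms quaternion_span_mult quaternion_span_matrix_inv by blast
  qed
qed

end

lemma trace_field_gen_group:
  fixes P R :: "real^2^2"
  defines "F \<equiv> field_gen {trace P, trace R, trace (P ** R)}"
  assumes "P \<in> S" "R \<in> S" "det P = 1" "det R = 1"
    and "S \<subseteq> quaternion_span F P R" "\<forall>g\<in>S. det g \<noteq> 0"
  shows "field_gen (trace ` gen_group S) = F"
proof (rule antisym)
  have F: "is_subfield F" unfolding F_def by (rule field_gen_subfield)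
  have in_F: "trace P \<in> F" "det P \<in> F" "trace R \<in> F" "det R \<in> F" "trace (P ** R) \<in> F"
    using field_gen_superset[of "{trace P, trace R, trace (P ** R)}"] assms(4,5) subfield_one[OF F]
    unfolding F_def by auto
  show "field_gen (trace ` gen_group S) \<subseteq> F"
    using gen_group_subset_quaternion_span[OF F in_F assms(6,7)] quaternion_span_trace[OF F in_F]
    by (intro field_gen_least[OF F]) blast
  have "P \<in> gen_group S" "R \<in> gen_group S" "P ** R \<in> gen_group S"
    using gen_group.mul[OF assms(2) gen_group.one] gen_group.mul[OF assms(3) gen_group.one]
      gen_group.mul[OF assms(2) gen_group.mul[OF assms(3) gen_group.one]] by simp_all
  then show "F \<subseteq> field_gen (trace ` gen_group S)"
    unfolding F_def using field_gen_superset[of "trace ` gen_group S"]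
    by (intro field_gen_least field_gen_subfield) auto
qed

text \<open>\<open>\<rho>\<close> and \<open>\<sigma>\<close> of the theorem, with \<open>p = \<surd>(c\<^sup>2 - 1)\<close> and the fractional entries \<open>a, b, d, e, g\<close>
  specified by their equations with denominators cleared.\<close>

locale doubled_torus_generators =
  fixes r s t c p M a b d e g :: real
  assumes c_eq: "c = 4 * r * s * t - 2 * r^2 - 2 * s^2 - 2 * t^2 + 1"
    and p_sq: "p^2 = c^2 - 1" and c_gt_1: "c > 1" and M_nonzero: "M \<noteq> 0"
    and a_eq: "a * p = r * (c + 1)"
    and b_eq: "b * (c - 1 + 2 * s^2) = M * (2 * r * s - t + (c + p) * t)"
    and d_eq: "d * (M * (c - 1)) = 2 * r * s - t + (c - p) * t"
    and e_eq: "e * p = s * (c + 1)"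
    and g_eq: "g * (M * (c - 1)) = c - 1 + 2 * s^2"
begin

definition torus_rho :: "real^2^2" where "torus_rho = mat2 (r + a) (- b) d (r - a)"
definition torus_sigma :: "real^2^2" where "torus_sigma = mat2 (s - e) M (- g) (s + e)"

lemma denominators_nonzero: "p^2 * (c - 1 + 2 * s^2) * (M * (c - 1)) \<noteq> 0"
proof -
  have "c^2 > 1" using c_gt_1 by (simp add: one_less_power)
  then have "p^2 > 0" using p_sq by linarith
  moreover have "c - 1 + 2 * s^2 > 0" using c_gt_1 by (simp add: add_pos_nonneg)
  ultimately show ?thesis using c_gt_1 M_nonzero by simp
qed

lemma det_torus_rho: "det torus_rho = 1"
proof -
  have "((r + a) * (r - a) + b * d - 1) * (p^2 * (c - 1 + 2 * s^2) * (M * (c - 1))) = 0"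
    using a_eq b_eq d_eq p_sq c_eq by algebra
  then show ?thesis using denominators_nonzero by (simp add: torus_rho_def)
qed

lemma det_torus_sigma: "det torus_sigma = 1"
proof -
  have "((s - e) * (s + e) + M * g - 1) * (p^2 * (M * (c - 1))) = 0"
    using e_eq g_eq p_sq by algebra
  then show ?thesis using denominators_nonzero by (simp add: torus_sigma_def)
qed

lemma trace_torus_rho_sigma: "trace (torus_rho ** torus_sigma) = 2 * t"
proof -
  have "((r + a) * (s - e) + b * g + (d * M + (r - a) * (s + e)) - 2 * t)
          * (p^2 * (c - 1 + 2 * s^2) * (M * (c - 1))) = 0"
    using a_eq b_eq d_eq e_eq g_eq p_sq c_eq by algebra
  then show ?thesis using denominators_nonzero by (simp add: torus_rho_def torus_sigma_def)
qed

lemma reflection_combination: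
  "(2 * r * s * t - r^2 + s^2 - t^2) *\<^sub>R mat 1 - (2 * s * t - r) *\<^sub>R torus_rho - s *\<^sub>R torus_sigma
     + t *\<^sub>R (torus_rho ** torus_sigma) = (- p / 2) *\<^sub>R mI"
proof -
  let ?k = "2 * r * s * t - r^2 + s^2 - t^2" and ?D = "p^2 * (c - 1 + 2 * s^2) * (M * (c - 1))"
  have "(?k - (2 * s * t - r) * (r + a) - s * (s - e) + t * ((r + a) * (s - e) + b * g) + p / 2) * ?D = 0"
    using a_eq b_eq e_eq g_eq p_sq c_eq by algebra
  moreover have "((2 * s * t - r) * b - s * M + t * ((r + a) * M - b * (s + e))) * ?D = 0"
    using a_eq b_eq e_eq p_sq c_eq by algebra
  moreover have "(- (2 * s * t - r) * d + s * g + t * (d * (s - e) - (r - a) * g)) * ?D = 0"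
    using a_eq d_eq e_eq g_eq p_sq c_eq by algebra
  moreover have "(?k - (2 * s * t - r) * (r - a) - s * (s + e) + t * (d * M + (r - a) * (s + e)) - p / 2) * ?D = 0"
    using a_eq d_eq e_eq p_sq c_eq by algebra
  ultimately have "?k - (2 * s * t - r) * (r + a) - s * (s - e) + t * ((r + a) * (s - e) + b * g) = - p / 2"
    "(2 * s * t - r) * b - s * M + t * ((r + a) * M - b * (s + e)) = 0"
    "- (2 * s * t - r) * d + s * g + t * (d * (s - e) - (r - a) * g) = 0"
    "?k - (2 * s * t - r) * (r - a) - s * (s + e) + t * (d * M + (r - a) * (s + e)) = p / 2"
    using denominators_nonzero by auto
  then show ?thesis
    unfolding torus_rho_def torus_sigma_def mI_def mat2_one by (simp add: mat2_eq_iff) argo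
qed

lemma trace_torus_rho: "trace torus_rho = 2 * r"
  and trace_torus_sigma: "trace torus_sigma = 2 * s"
  by (simp_all add: torus_rho_def torus_sigma_def)

lemma torus_invariants_mem_field_gen:
  "trace torus_rho \<in> field_gen {r, s, t}" "det torus_rho \<in> field_gen {r, s, t}"
  "trace torus_sigma \<in> field_gen {r, s, t}" "det torus_sigma \<in> field_gen {r, s, t}"
  "trace (torus_rho ** torus_sigma) \<in> field_gen {r, s, t}"
  using field_gen_superset[of "{r, s, t}"]
  by (simp_all add: trace_torus_rho trace_torus_sigma det_torus_rho det_torus_sigma
      trace_torus_rho_sigma subfield_closed[OF field_gen_subfield])

lemma mirror_mem_quaternion_span:
  assumes "X \<in> quaternion_span (field_gen {r, s, t}) torus_rho torus_sigma"
  shows "mI ** X ** mI \<in> quaternion_span (field_gen {r, s, t}) torus_rho torus_sigma"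
proof -
  let ?F = "field_gen {r, s, t}"
  let ?Y = "(2 * r * s * t - r^2 + s^2 - t^2) *\<^sub>R mat 1 - (2 * s * t - r) *\<^sub>R torus_rho
    - s *\<^sub>R torus_sigma + t *\<^sub>R (torus_rho ** torus_sigma)"
  note F = field_gen_subfield[of "{r, s, t}"]
  note span = quaternion_span_basis[OF F torus_invariants_mem_field_gen]
    quaternion_span_add[OF F torus_invariants_mem_field_gen]
    quaternion_span_diff[OF F torus_invariants_mem_field_gen]
    quaternion_span_scaleR[OF F torus_invariants_mem_field_gen]
    quaternion_span_mult[OF F torus_invariants_mem_field_gen]
  have rst: "r \<in> ?F" "s \<in> ?F" "t \<in> ?F" using field_gen_superset[of "{r, s, t}"] by auto
  then have "?Y \<in> quaternion_span ?F torus_rho torus_sigma"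
    by (simp add: span subfield_closed[OF F])
  moreover have "4 / (c^2 - 1) \<in> ?F" using rst by (simp add: c_eq subfield_closed[OF F])
  moreover have "mI ** X ** mI = (4 / (c^2 - 1)) *\<^sub>R (?Y ** X ** ?Y)"
  proof -
    have Y: "?Y ** X ** ?Y = (p^2 / 4) *\<^sub>R (mI ** X ** mI)"
      unfolding reflection_combination
      by (simp only: scalar_matrix_assoc[symmetric] matrix_scalar_ac scaleR_scaleR)
        (simp add: power2_eq_square)
    have "p^2 \<noteq> 0" using denominators_nonzero by simp
    then have factor: "4 / (c^2 - 1) * (p^2 / 4) = 1" using p_sq by simp
    show ?thesis unfolding Y scaleR_scaleR factor by simp
  qed
  ultimately show ?thesis using assms by (simp add: span)
qed

lemma trace_field_doubled_torus:
  "field_gen (trace ` gen_group {torus_rho, torus_sigma, mI ** torus_rho ** mI,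
     mI ** torus_sigma ** mI, - mat 1}) = field_gen {r, s, t}"
proof -
  let ?A = "quaternion_span (field_gen {r, s, t}) torus_rho torus_sigma"
  note F = field_gen_subfield[of "{r, s, t}"]
  have F_eq: "field_gen {trace torus_rho, trace torus_sigma, trace (torus_rho ** torus_sigma)}
      = field_gen {r, s, t}"
    using field_gen_double[of "{r, s, t}"]
    by (simp add: trace_torus_rho trace_torus_sigma trace_torus_rho_sigma)
  have basis: "torus_rho \<in> ?A" "torus_sigma \<in> ?A" "mat 1 \<in> ?A"
    by (simp_all add: quaternion_span_basis[OF F torus_invariants_mem_field_gen])
  then have "- mat 1 \<in> ?A"
    using quaternion_span_scaleR[OF F torus_invariants_mem_field_gen, of "- 1" "mat 1"]
    by (simp add: subfield_closed[OF F])
  moreover have "det (- mat 1 :: real^2^2) = 1" by (simp add: mat2_one)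
  ultimately show ?thesis
    using basis mirror_mem_quaternion_span[OF basis(1)] mirror_mem_quaternion_span[OF basis(2)]
    by (intro trace_field_gen_group[of torus_rho _ torus_sigma, unfolded F_eq])
      (simp_all add: det_mul det_mI det_torus_rho det_torus_sigma)
qed

end

theorem theorem2p3:
  fixes r s t M c Mt :: real and \<rho> \<sigma> \<rho>' \<sigma>' :: "real^2^2"
  assumes "r > 1" and "s > 1" and "t > 1" and "M > 0"
    and c_def: "c = 4 * r * s * t - 2 * r^2 - 2 * s^2 - 2 * t^2 + 1"
    and "c > 1"
    and Mt_def: "Mt = M * (s * sqrt (c^2 - 1) + (c - 1) * sqrt (s^2 - 1)) / (c - 1)"
    and rho_def: "\<rho> = r *\<^sub>R mat 1 + (r * (c+1) / sqrt (c^2 - 1)) *\<^sub>R mI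
        - (Mt * (2 * r * s - t + (c + sqrt (c^2 - 1)) * t) / (2 * (c - 1 + 2 * s^2))) *\<^sub>R (mJ + mK)
        + ((2 * r * s - t + (c - sqrt (c^2 - 1)) * t) / (2 * Mt * (c - 1))) *\<^sub>R (mJ - mK)"
    and sigma_def: "\<sigma> = s *\<^sub>R mat 1 - (s * (c+1) / sqrt (c^2 - 1)) *\<^sub>R mI
        + (Mt / 2) *\<^sub>R (mJ + mK)
        - ((c - 1 + 2 * s^2) / (2 * Mt * (c - 1))) *\<^sub>R (mJ - mK)"
    and rho'_def: "\<rho>' = r *\<^sub>R mat 1 + (r * (c+1) / sqrt (c^2 - 1)) *\<^sub>R mI
        + (Mt * (2 * r * s - t + (c + sqrt (c^2 - 1)) * t) / (2 * (c - 1 + 2 * s^2))) *\<^sub>R (mJ + mK)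
        - ((2 * r * s - t + (c - sqrt (c^2 - 1)) * t) / (2 * Mt * (c - 1))) *\<^sub>R (mJ - mK)"
    and sigma'_def: "\<sigma>' = s *\<^sub>R mat 1 - (s * (c+1) / sqrt (c^2 - 1)) *\<^sub>R mI
        - (Mt / 2) *\<^sub>R (mJ + mK)
        + ((c - 1 + 2 * s^2) / (2 * Mt * (c - 1))) *\<^sub>R (mJ - mK)"
  shows "field_gen (trace ` gen_group {\<rho>, \<sigma>, \<rho>', \<sigma>', - mat 1}) = field_gen {r, s, t}"
proof -
  define p where "p = sqrt (c^2 - 1)"
  have "c^2 > 1" using \<open>c > 1\<close> by (simp add: one_less_power)
  then have p_sq: "p^2 = c^2 - 1" and "p > 0" unfolding p_def by simp_all
  have "s * p + (c - 1) * sqrt (s^2 - 1) > 0"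
    using \<open>p > 0\<close> \<open>s > 1\<close> \<open>c > 1\<close> by (intro add_pos_nonneg) auto
  then have "Mt \<noteq> 0" unfolding Mt_def p_def[symmetric] using \<open>M > 0\<close> \<open>c > 1\<close> by simp
  have "c - 1 + 2 * s^2 > 0" using \<open>c > 1\<close> by (simp add: add_pos_nonneg)
  interpret doubled_torus_generators r s t c p Mt "r * (c + 1) / p"
    "Mt * (2 * r * s - t + (c + p) * t) / (c - 1 + 2 * s^2)"
    "(2 * r * s - t + (c - p) * t) / (Mt * (c - 1))" "s * (c + 1) / p"
    "(c - 1 + 2 * s^2) / (Mt * (c - 1))"
    using c_def p_sq \<open>c > 1\<close> \<open>Mt \<noteq> 0\<close> \<open>p > 0\<close> \<open>c - 1 + 2 * s^2 > 0\<close>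
    by unfold_locales simp_all
  have "\<rho> = torus_rho" "\<sigma> = torus_sigma" "\<rho>' = mI ** torus_rho ** mI" "\<sigma>' = mI ** torus_sigma ** mI"
    unfolding rho_def sigma_def rho'_def sigma'_def p_def[symmetric] torus_rho_def torus_sigma_def
      mI_def mJ_def mK_def mat2_one
    using \<open>p > 0\<close> \<open>Mt \<noteq> 0\<close> \<open>c > 1\<close> \<open>c - 1 + 2 * s^2 > 0\<close>
    by (simp_all add: mat2_eq_iff field_simps)
  then show ?thesis using trace_field_doubled_torus by simp
qed

end
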